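(* Let $n\ge2$ and define $\mathscr{G}_{1,n}:=\{A=[a_{j,k}]\in\mathbb{C}^{n\times n}: \widehat{A}\text{ is non-derogatory and }(a_{2,1},\dots,a_{n,1})^T\text{ is a cyclic vector of }\widehat{A}\}$. Let $A=[a_{j,k}],B=[b_{j,k}]\in\mathscr{G}_{1,n}$ with $\pi_n(A)=\pi_n(B)$. If $\widehat{A}=\widehat{B}$ and $(a_{2,1},\dots,a_{n,1})=(b_{2,1},\dots,b_{n,1})$, then $(a_{1,2},\dots,a_{1,n})=(b_{1,2},\dots,b_{1,n})$.
   Context: For $A\in\mathbb{C}^{n\times n}$, $\widehat{A}$ denotes the $(n-1)\times(n-1)$ matrix obtained by deleting the first row and column of $A$. A matrix $X\in\mathbb{C}^{k\times k}$ is non-derogatory if it has a cyclic vector $v$ (i.e. $v,Xv,\dots,X^{k-1}v$ span $\mathbb{C}^k$). $\mathscr{I}^j$ is the set of increasing $j$-tuples in $\{1,\dots,n\}$, $A_I$ the principal submatrix indexed by $I$. The map $\pi_n=(X,Y):\mathbb{C}^{n\times n}\to\mathbb{C}^n\times\mathbb{C}^{n-1}$ is $X_1(A)=a_{1,1}$, $X_j(A)=\sum_{I\in\mathscr{I}^j:i_1=1}\det(A_I)$ ($2\le j\le n$), $Y_j(A)=\sum_{I\in\mathscr{I}^j:i_1\ge2}\det(A_I)$ ($1\le j\le n-1$). *)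

theory Defs
  imports "Jordan_Normal_Form.Determinant" "Jordan_Normal_Form.DL_Submatrix"
begin

text \<open>Matrices are Jordan_Normal_Form matrices with 0-based indices: the paper's
  row/column 1 is index 0 here.\<close>

definition hat :: "'a mat \<Rightarrow> 'a mat" where
  "hat A = mat (dim_row A - 1) (dim_col A - 1) (\<lambda>(i,j). A $$ (Suc i, Suc j))"

definition cyclic_vector :: "complex mat \<Rightarrow> complex vec \<Rightarrow> bool" where
  "cyclic_vector X v \<longleftrightarrow> (let k = dim_row X in
     X \<in> carrier_mat k k \<and> v \<in> carrier_vec k \<and>
     (\<forall>w \<in> carrier_vec k. \<exists>c :: nat \<Rightarrow> complex.
        w = finsum_vec TYPE(complex) k (\<lambda>i. c i \<cdot>\<^sub>v ((X ^\<^sub>m i) *\<^sub>v v)) {..<k}))"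

definition non_derogatory :: "complex mat \<Rightarrow> bool" where
  "non_derogatory X \<longleftrightarrow> (\<exists>v. cyclic_vector X v)"

definition col1_tail :: "'a mat \<Rightarrow> 'a vec" where
  "col1_tail A = vec (dim_row A - 1) (\<lambda>i. A $$ (Suc i, 0))"

definition row1_tail :: "'a mat \<Rightarrow> 'a vec" where
  "row1_tail A = vec (dim_col A - 1) (\<lambda>j. A $$ (0, Suc j))"

definition G1 :: "nat \<Rightarrow> complex mat set" where
  "G1 n = {A \<in> carrier_mat n n. non_derogatory (hat A) \<and> cyclic_vector (hat A) (col1_tail A)}"

definition Xc :: "nat \<Rightarrow> complex mat \<Rightarrow> nat \<Rightarrow> complex" where
  "Xc n A j = (if j = 1 then A $$ (0,0)
     else (\<Sum>I \<in> {I. I \<subseteq> {..<n} \<and> card I = j \<and> 0 \<in> I}. det (submatrix A I I)))"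

definition Yc :: "nat \<Rightarrow> complex mat \<Rightarrow> nat \<Rightarrow> complex" where
  "Yc n A j = (\<Sum>I \<in> {I. I \<subseteq> {..<n} \<and> card I = j \<and> 0 \<notin> I}. det (submatrix A I I))"

definition pi_eq :: "nat \<Rightarrow> complex mat \<Rightarrow> complex mat \<Rightarrow> bool" where
  "pi_eq n A B \<longleftrightarrow> (\<forall>j \<in> {1..n}. Xc n A j = Xc n B j) \<and> (\<forall>j \<in> {1..n-1}. Yc n A j = Yc n B j)"

end

theory Submission
  imports Defs "Jordan_Normal_Form.Char_Poly"
begin

(* Write n = m + 1, H = hat A = hat B, c = col1_tail A = col1_tail B and d = row1_tail A - row1_tail B.
   The proof is purely algebraic and works over the polynomial ring C[t].

   (1) The characteristic polynomial det (t I + M) = char_poly (-M) is the sum over all index sets I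
       of t^(n - |I|) det M_I.  Grouping the minors of size j according to whether 0 \<in> I, the
       coefficient of t^(n-j) is X_j(M) + Y_j(M).  As A and B differ only in the entries (0,k), k > 0,
       all minors avoiding index 0 agree, and the remaining ones agree by pi_n(A) = pi_n(B); hence
       A and B have the same characteristic polynomial.
   (2) Both determinants are linear in the first row, so their difference is the determinant of the
       bordered matrix [0, d^T; c, t I + H], which therefore vanishes.  Since det (t I + H) \<noteq> 0,
       a Schur-complement computation turns this into  d^T adj(t I + H) c = 0  in C[t].
   (3) Put a_k = d^T adj(t I + H) H^k c.  From adj(K) K = det K I one gets the recurrence
       a_(k+1) = det K (d \<bullet> H^k c) - t a_k with a_0 = 0.  Expanding H^m c in the cyclic basis
       c, Hc, ..., H^(m-1) c and comparing coefficients of powers of t shows d \<bullet> H^j c = 0 for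
       all j < m; since these vectors span C^m, d = 0.
   The first two sections below establish (1), the third section (2) and the fourth section (3),
   stated for general matrices wherever the argument allows; the last section combines them. *)

section \<open>Principal-minor expansion of the characteristic polynomial\<close>

(* restrict_rows M I keeps the rows of M indexed by I and replaces every other row by the
   corresponding row of the identity matrix; its determinant is the principal minor det M_I. *)
definition restrict_rows :: "'a::comm_ring_1 mat \<Rightarrow> nat set \<Rightarrow> 'a mat" where
  "restrict_rows M I = mat (dim_row M) (dim_col M)
     (\<lambda>(i,j). if i \<in> I then M $$ (i,j) else if i = j then 1 else 0)"

lemma prod_restrict_rows_perm:
  fixes M :: "'a::comm_ring_1 mat"
  assumes M: "M \<in> carrier_mat n n" and I: "I \<subseteq> {0..<n}" and p: "p permutes {0..<n}"
  shows "(\<Prod>i = 0..<n. restrict_rows M I $$ (i, p i))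
    = (\<Prod>i\<in>I. M $$ (i, p i)) * (\<Prod>i\<in>{0..<n} - I. if p i = i then 1 else 0)"
proof -
  have pn: "p i < n" if "i < n" for i using p that permutes_in_image by fastforce
  have "(\<Prod>i = 0..<n. restrict_rows M I $$ (i, p i))
      = (\<Prod>i\<in>I. restrict_rows M I $$ (i, p i)) * (\<Prod>i\<in>{0..<n} - I. restrict_rows M I $$ (i, p i))"
    using I by (subst prod.subset_diff[of I]) (auto simp: mult.commute)
  also have "\<dots> = (\<Prod>i\<in>I. M $$ (i, p i)) * (\<Prod>i\<in>{0..<n} - I. if p i = i then 1 else 0)"
    using I M pn by (intro arg_cong2[where f="(*)"] prod.cong) (auto simp: restrict_rows_def)
  finally show ?thesis .
qed

lemma prod_if_const:
  fixes t :: "'a::comm_ring_1"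
  assumes "finite S"
  shows "(\<Prod>i\<in>S. if P i then t else 0) = t ^ card S * (\<Prod>i\<in>S. if P i then 1 else 0)"
proof -
  have "(\<Prod>i\<in>S. if P i then t else 0) = (\<Prod>i\<in>S. t * (if P i then 1 else 0))"
    by (rule prod.cong) auto
  also have "\<dots> = t ^ card S * (\<Prod>i\<in>S. if P i then 1 else 0)"
    by (simp add: prod.distrib)
  finally show ?thesis .
qed

lemma det_shift_restrict_rows:
  fixes M :: "'a::comm_ring_1 mat"
  assumes M: "M \<in> carrier_mat n n"
  shows "det (t \<cdot>\<^sub>m 1\<^sub>m n + M) = (\<Sum>I\<in>Pow {0..<n}. t ^ (n - card I) * det (restrict_rows M I))"
proof -
  let ?P = "{p. p permutes {0..<n}}"
  let ?D = "\<lambda>p i. if p i = i then t else 0"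
  have c: "t \<cdot>\<^sub>m 1\<^sub>m n + M \<in> carrier_mat n n" using M by auto
  have rc: "restrict_rows M I \<in> carrier_mat n n" for I using M by (auto simp: restrict_rows_def)
  have "det (t \<cdot>\<^sub>m 1\<^sub>m n + M) = (\<Sum>p\<in>?P. signof p * (\<Prod>i\<in>{0..<n}. M $$ (i, p i) + ?D p i))"
    unfolding det_def'[OF c]
  proof (rule sum.cong[OF refl])
    fix p assume "p \<in> ?P"
    hence "p i < n" if "i < n" for i using that permutes_in_image by fastforce
    thus "signof p * (\<Prod>i = 0..<n. (t \<cdot>\<^sub>m 1\<^sub>m n + M) $$ (i, p i)) =
         signof p * (\<Prod>i\<in>{0..<n}. M $$ (i, p i) + ?D p i)"
      using M by (intro arg_cong[where f="\<lambda>x. signof p * x"] prod.cong) auto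
  qed
  also have "\<dots> = (\<Sum>I\<in>Pow {0..<n}. \<Sum>p\<in>?P. signof p * ((\<Prod>i\<in>I. M $$ (i, p i)) * (\<Prod>i\<in>{0..<n} - I. ?D p i)))"
    by (subst sum.swap) (simp add: prod_add sum_distrib_left)
  also have "\<dots> = (\<Sum>I\<in>Pow {0..<n}. t ^ (n - card I) * det (restrict_rows M I))"
  proof (rule sum.cong[OF refl])
    fix I assume "I \<in> Pow {0..<n}"
    hence I: "I \<subseteq> {0..<n}" by auto
    have cI: "card ({0..<n} - I) = n - card I" using I by (simp add: card_Diff_subset finite_subset)
    have "(\<Prod>i\<in>{0..<n} - I. ?D p i) = t ^ (n - card I) * (\<Prod>i\<in>{0..<n} - I. if p i = i then 1 else 0)" for p
      using prod_if_const[of "{0..<n} - I" "\<lambda>i. p i = i" t] cI by simp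
    hence "(\<Sum>p\<in>?P. signof p * ((\<Prod>i\<in>I. M $$ (i, p i)) * (\<Prod>i\<in>{0..<n} - I. ?D p i)))
      = (\<Sum>p\<in>?P. t ^ (n - card I) * (signof p * (\<Prod>i\<in>{0..<n}. restrict_rows M I $$ (i, p i))))"
      using prod_restrict_rows_perm[OF M I] by (intro sum.cong refl) (simp add: atLeast0LessThan ac_simps)
    also have "\<dots> = t ^ (n - card I) * det (restrict_rows M I)"
      unfolding det_def'[OF rc] by (simp add: sum_distrib_left atLeast0LessThan)
    finally show "(\<Sum>p\<in>?P. signof p * ((\<Prod>i\<in>I. M $$ (i, p i)) * (\<Prod>i\<in>{0..<n} - I. ?D p i)))
      = t ^ (n - card I) * det (restrict_rows M I)" .
  qed
  finally show ?thesis .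
qed

(* Only permutations fixing every index outside I survive in the Leibniz expansion of
   restrict_rows M I. *)
lemma det_restrict_rows_perm_sum:
  fixes M :: "'a::comm_ring_1 mat"
  assumes M: "M \<in> carrier_mat n n" and I: "I \<subseteq> {0..<n}"
  shows "det (restrict_rows M I) = (\<Sum>p\<in>{p. p permutes I}. signof p * (\<Prod>i\<in>I. M $$ (i, p i)))"
proof -
  have rc: "restrict_rows M I \<in> carrier_mat n n" using M by (auto simp: restrict_rows_def)
  let ?fix = "\<lambda>p. \<Prod>i\<in>{0..<n} - I. if p i = i then 1 else (0::'a)"
  have fix1: "?fix p = 1" if "p permutes I" for p
    using that by (intro prod.neutral) (auto simp: permutes_not_in)
  have fix0: "?fix p = 0" if p: "p permutes {0..<n}" "\<not> p permutes I" for p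
  proof -
    have "\<exists>i\<in>{0..<n} - I. p i \<noteq> i"
    proof (rule ccontr)
      assume "\<not> ?thesis"
      hence "p x = x" if "x \<notin> I" for x using p that by (cases "x < n") (auto simp: permutes_not_in)
      thus False using p permutes_bij unfolding permutes_def bij_iff by blast
    qed
    thus ?thesis by (intro prod_zero) auto
  qed
  have "det (restrict_rows M I) = (\<Sum>p\<in>{p. p permutes {0..<n}}. signof p * ((\<Prod>i\<in>I. M $$ (i, p i)) * ?fix p))"
    unfolding det_def'[OF rc] using prod_restrict_rows_perm[OF M I] by (simp add: atLeast0LessThan)
  also have "\<dots> = (\<Sum>p\<in>{p. p permutes I}. signof p * (\<Prod>i\<in>I. M $$ (i, p i)))"
  proof (rule sum.mono_neutral_cong_right)
    show "{p. p permutes I} \<subseteq> {p. p permutes {0..<n}}" using I permutes_subset by blast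
  qed (auto simp: finite_permutations fix0 fix1)
  finally show ?thesis .
qed

lemma pick_rank_bij:
  assumes I: "finite I" and rk_def: "\<And>x. rk x = card {a\<in>I. a < x}"
  shows "\<And>a. a < card I \<Longrightarrow> pick I a \<in> I"
    "\<And>a. a < card I \<Longrightarrow> rk (pick I a) = a"
    "\<And>i. i \<in> I \<Longrightarrow> pick I (rk i) = i"
    "\<And>i. i \<in> I \<Longrightarrow> rk i < card I"
    "bij_betw (pick I) {0..<card I} I"
    "bij_betw rk I {0..<card I}"
proof -
  show 1: "\<And>a. a < card I \<Longrightarrow> pick I a \<in> I" by (rule pick_in_set) auto
  show 2: "\<And>a. a < card I \<Longrightarrow> rk (pick I a) = a" unfolding rk_def by (rule card_pick) auto
  show 3: "\<And>i. i \<in> I \<Longrightarrow> pick I (rk i) = i" unfolding rk_def by (rule pick_card_in_set)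
  show 4: "\<And>i. i \<in> I \<Longrightarrow> rk i < card I"
  proof -
    fix i assume i: "i \<in> I"
    have "{a\<in>I. a < i} \<subset> I" using i by auto
    thus "rk i < card I" unfolding rk_def using I by (rule psubset_card_mono[rotated])
  qed
  show "bij_betw (pick I) {0..<card I} I"
    by (rule bij_betw_byWitness[where f'=rk]) (use 1 2 3 4 in auto)
  show "bij_betw rk I {0..<card I}"
    by (rule bij_betw_byWitness[where f'="pick I"]) (use 1 2 3 4 in auto)
qed

(* The Leibniz expansion of a principal minor, reindexed from permutations of {0..<|I|} to
   permutations of I. *)
lemma det_submatrix_perm_sum:
  fixes M :: "'a::comm_ring_1 mat"
  assumes M: "M \<in> carrier_mat n n" and I: "I \<subseteq> {0..<n}"
  shows "det (submatrix M I I) = (\<Sum>p\<in>{p. p permutes I}. signof p * (\<Prod>i\<in>I. M $$ (i, p i)))"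
proof -
  define k where "k = card I"
  define rk where "rk x = card {a\<in>I. a < x}" for x
  have fI: "finite I" using I finite_subset by blast
  note pr = pick_rank_bij[OF fI rk_def, folded k_def]
  have e: "{i. i < dim_row M \<and> i \<in> I} = I" "{i. i < dim_col M \<and> i \<in> I} = I" using M I by auto
  have ck: "card {i. i < dim_row M \<and> i \<in> I} = k" "card {i. i < dim_col M \<and> i \<in> I} = k"
    unfolding e k_def by simp_all
  have sc: "submatrix M I I \<in> carrier_mat k k" using dim_submatrix[of M I I] ck by (intro carrier_matI) argo+
  let ?g = "\<lambda>\<sigma>. signof \<sigma> * (\<Prod>a = 0..<k. M $$ (pick I a, pick I (\<sigma> a)))"
  let ?h = "\<lambda>p. signof p * (\<Prod>i\<in>I. M $$ (i, p i))"
  let ?lift = "\<lambda>\<sigma> x. if x \<in> I then pick I (\<sigma> (rk x)) else x"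
  let ?lower = "\<lambda>p a. if a \<in> {0..<k} then rk (p (pick I a)) else a"
  have "det (submatrix M I I) = (\<Sum>\<sigma>\<in>{\<sigma>. \<sigma> permutes {0..<k}}. ?g \<sigma>)"
    unfolding det_def'[OF sc]
  proof (rule sum.cong[OF refl])
    fix \<sigma> assume "\<sigma> \<in> {\<sigma>. \<sigma> permutes {0..<k}}"
    hence sk: "\<sigma> a < k" if "a < k" for a using that permutes_in_image by fastforce
    show "signof \<sigma> * (\<Prod>i = 0..<k. submatrix M I I $$ (i, \<sigma> i)) = ?g \<sigma>"
      by (intro arg_cong[where f="\<lambda>x. signof \<sigma> * x"] prod.cong refl)
         (use sk ck in \<open>auto simp: submatrix_index\<close>)
  qed
  also have "\<dots> = (\<Sum>p\<in>{p. p permutes I}. ?h p)"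
  proof (rule sum.reindex_bij_witness[where j = ?lift and i = ?lower])
    fix \<sigma> assume s: "\<sigma> \<in> {\<sigma>. \<sigma> permutes {0..<k}}"
    interpret pb: permutes_bij_finite \<sigma> "{0..<k}" I "pick I" rk "?lift \<sigma>"
      by unfold_locales (use s pr in auto)
    show "?lift \<sigma> \<in> {p. p permutes I}" using pb.permutes_p' by simp
    have sk: "\<sigma> a < k" if "a < k" for a using s that permutes_in_image by fastforce
    show "?lower (?lift \<sigma>) = \<sigma>"
    proof
      fix a show "?lower (?lift \<sigma>) a = \<sigma> a" using sk[of a] pr s by (auto simp: permutes_not_in)
    qed
    have "(\<Prod>i\<in>I. M $$ (i, ?lift \<sigma> i)) = (\<Prod>a = 0..<k. M $$ (pick I a, pick I (\<sigma> a)))"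
      using prod.reindex_bij_betw[OF pr(5), of "\<lambda>i. M $$ (i, ?lift \<sigma> i)"] pr by (auto intro!: prod.cong)
    then show "?h (?lift \<sigma>) = ?g \<sigma>" using pb.sign_p' by simp
  next
    fix p assume s: "p \<in> {p. p permutes I}"
    interpret pb: permutes_bij_finite p I "{0..<k}" rk "pick I" "?lower p"
      by unfold_locales (use s pr fI in auto)
    show "?lower p \<in> {\<sigma>. \<sigma> permutes {0..<k}}" using pb.permutes_p' by simp
    have sk: "p i \<in> I" if "i \<in> I" for i using s that permutes_in_image by fastforce
    show "?lift (?lower p) = p"
    proof
      fix x show "?lift (?lower p) x = p x" using sk[of x] pr s by (auto simp: permutes_not_in)
    qed
  qed
  finally show ?thesis .
qed

(* Both sides have the same expansion over the permutations of I. *)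
lemma det_submatrix_restrict_rows:
  fixes M :: "'a::comm_ring_1 mat"
  assumes "M \<in> carrier_mat n n" and "I \<subseteq> {0..<n}"
  shows "det (submatrix M I I) = det (restrict_rows M I)"
  unfolding det_submatrix_perm_sum[OF assms] det_restrict_rows_perm_sum[OF assms] ..

interpretation const_poly: comm_ring_hom "\<lambda>a::'a::comm_ring_1. [:a:]"
  by unfold_locales (auto simp: one_pCons)

lemma submatrix_map_mat: "submatrix (map_mat f A) I J = map_mat f (submatrix A I J)"
  unfolding submatrix_def by (rule eq_matI) (auto simp: pick_le)

lemma char_poly_matrix_uminus:
  assumes "A \<in> carrier_mat n n"
  shows "char_poly_matrix (-A) = [:0,1:] \<cdot>\<^sub>m 1\<^sub>m n + map_mat (\<lambda>a. [:a:]) A"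
  using assms unfolding char_poly_matrix_def by (intro eq_matI) auto

lemma char_poly_uminus_minor_sums:
  fixes A :: "'a::comm_ring_1 mat"
  assumes A: "A \<in> carrier_mat n n"
  shows "char_poly (-A) = (\<Sum>j\<le>n. [:0,1:] ^ (n - j) *
    [: \<Sum>I\<in>{I. I \<subseteq> {..<n} \<and> card I = j}. det (submatrix A I I) :])"
proof -
  let ?X = "[:0,1::'a:]"
  let ?f = "\<lambda>I. ?X ^ (n - card I) * [: det (submatrix A I I) :]"
  have Al: "map_mat (\<lambda>a. [:a:]) A \<in> carrier_mat n n" using A by simp
  have "char_poly (-A) = (\<Sum>I\<in>Pow {0..<n}. ?X ^ (n - card I) * det (restrict_rows (map_mat (\<lambda>a. [:a:]) A) I))"
    unfolding char_poly_def char_poly_matrix_uminus[OF A] by (rule det_shift_restrict_rows[OF Al])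
  also have "\<dots> = sum ?f (Pow {0..<n})"
  proof (rule sum.cong[OF refl])
    fix I assume "I \<in> Pow {0..<n}"
    hence I: "I \<subseteq> {0..<n}" by auto
    show "?X ^ (n - card I) * det (restrict_rows (map_mat (\<lambda>a. [:a:]) A) I) = ?f I"
      unfolding det_submatrix_restrict_rows[OF Al I, symmetric] submatrix_map_mat const_poly.hom_det ..
  qed
  also have "\<dots> = (\<Sum>j\<le>n. sum ?f {I\<in>Pow {0..<n}. card I = j})"
    by (rule sum.group[symmetric]) (auto simp: card_mono[of "{0..<n}", simplified])
  also have "\<dots> = (\<Sum>j\<le>n. ?X ^ (n - j) * [: \<Sum>I\<in>{I. I \<subseteq> {..<n} \<and> card I = j}. det (submatrix A I I) :])"
    unfolding const_poly.hom_sum sum_distrib_left by (intro sum.cong refl) (auto simp: atLeast0LessThan)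
  finally show ?thesis .
qed

(* The characteristic polynomial is monic, hence nonzero. *)
lemma char_poly_nonzero:
  fixes A :: "'a::comm_ring_1 mat"
  assumes "A \<in> carrier_mat n n"
  shows "char_poly A \<noteq> 0"
  using degree_monic_char_poly[OF assms] by auto

section \<open>Equal projections force equal characteristic polynomials\<close>

lemma submatrix_cong:
  assumes A: "A \<in> carrier_mat n n" and B: "B \<in> carrier_mat n n" and I: "I \<subseteq> {..<n}"
    and agree: "\<And>i j. i \<in> I \<Longrightarrow> j \<in> I \<Longrightarrow> A $$ (i,j) = B $$ (i,j)"
  shows "submatrix A I I = submatrix B I I"
proof -
  have e: "{i. i < n \<and> i \<in> I} = I" using I by auto
  have "finite I" using I finite_subset by blast
  then show ?thesis unfolding submatrix_def using A B
    by (intro eq_matI) (auto simp: e intro!: agree pick_in_set)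
qed

(* If A and B differ at most in the entries (0,k), k > 0, and have the same X_j for j \<ge> 2, then
   every sum of principal minors of fixed size agrees: minors avoiding 0 coincide entrywise,
   minors containing 0 are governed by X_j, and for sizes below 2 only the entry (0,0) occurs. *)
lemma char_poly_uminus_eq_first_row_change:
  fixes A B :: "complex mat"
  assumes A: "A \<in> carrier_mat n n" and B: "B \<in> carrier_mat n n"
    and agree: "\<And>i j. i < n \<Longrightarrow> j < n \<Longrightarrow> i \<noteq> 0 \<or> j = 0 \<Longrightarrow> A $$ (i,j) = B $$ (i,j)"
    and X: "\<And>j. 2 \<le> j \<Longrightarrow> j \<le> n \<Longrightarrow> Xc n A j = Xc n B j"
  shows "char_poly (-A) = char_poly (-B)"
proof -
  let ?S = "\<lambda>M P. \<Sum>I\<in>{I. I \<subseteq> {..<n} \<and> P I}. det (submatrix M I I)"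
  have split: "?S M (\<lambda>I. card I = j) = ?S M (\<lambda>I. card I = j \<and> 0 \<in> I) + ?S M (\<lambda>I. card I = j \<and> 0 \<notin> I)"
    for M :: "complex mat" and j
    by (subst sum.union_disjoint[symmetric]) (auto intro: arg_cong2[where f=sum] finite_subset)
  have minor_eq: "det (submatrix A I I) = det (submatrix B I I)"
    if "I \<subseteq> {..<n}" and "\<And>i j. i \<in> I \<Longrightarrow> j \<in> I \<Longrightarrow> i \<noteq> 0 \<or> j = 0" for I
    using that by (metis (no_types, lifting) submatrix_cong[OF A B] agree lessThan_iff subsetD)
  have with0: "?S A (\<lambda>I. card I = j \<and> 0 \<in> I) = ?S B (\<lambda>I. card I = j \<and> 0 \<in> I)" if "j \<le> n" for j
  proof (cases "2 \<le> j")
    case True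
    then show ?thesis using X[OF True \<open>j \<le> n\<close>] unfolding Xc_def by (simp add: conj_commute)
  next
    case False
    have "I = {0}" if "I \<subseteq> {..<n}" "card I = j" "0 \<in> I" for I
      using that False card_le_Suc0_iff_eq[of I] by (auto intro: finite_subset)
    then show ?thesis by (intro sum.cong refl minor_eq) auto
  qed
  have without0: "?S A (\<lambda>I. card I = j \<and> 0 \<notin> I) = ?S B (\<lambda>I. card I = j \<and> 0 \<notin> I)" for j
    by (intro sum.cong refl minor_eq) (auto, metis gr0I)
  show ?thesis
    unfolding char_poly_uminus_minor_sums[OF A] char_poly_uminus_minor_sums[OF B] split
    using with0 without0 by (intro sum.cong refl) auto
qed

section \<open>The difference of the characteristic polynomials as a bordered determinant\<close>

lemma det_diff_first_row:
  fixes P Q :: "'a::comm_ring_1 mat"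
  assumes P: "P \<in> carrier_mat n n" and Q: "Q \<in> carrier_mat n n" and n: "0 < n"
    and agree: "\<And>i j. 0 < i \<Longrightarrow> i < n \<Longrightarrow> j < n \<Longrightarrow> P $$ (i,j) = Q $$ (i,j)"
  shows "det P - det Q = det (mat n n (\<lambda>(i,j). if i = 0 then P $$ (0,j) - Q $$ (0,j) else P $$ (i,j)))"
proof -
  define N where "N = mat n n (\<lambda>(i,j). if i = 0 then P $$ (0,j) - Q $$ (0,j) else P $$ (i,j))"
  have N: "N \<in> carrier_mat n n" unfolding N_def by auto
  have "mat_delete P 0 j = mat_delete N 0 j" "mat_delete Q 0 j = mat_delete N 0 j" for j
    using P Q agree unfolding N_def mat_delete_def by (auto intro!: eq_matI)
  hence cof: "cofactor P 0 j = cofactor N 0 j" "cofactor Q 0 j = cofactor N 0 j" for j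
    unfolding cofactor_def by auto
  have "det N = (\<Sum>j<n. N $$ (0,j) * cofactor N 0 j)" by (rule laplace_expansion_row[OF N n])
  also have "\<dots> = (\<Sum>j<n. P $$ (0,j) * cofactor P 0 j) - (\<Sum>j<n. Q $$ (0,j) * cofactor Q 0 j)"
    unfolding sum_subtractf[symmetric] cof using n by (intro sum.cong refl) (auto simp: N_def algebra_simps)
  also have "\<dots> = det P - det Q"
    using laplace_expansion_row[OF P n] laplace_expansion_row[OF Q n] by simp
  finally show ?thesis unfolding N_def by simp
qed

lemma char_poly_diff_bordered:
  fixes A B :: "'a::comm_ring_1 mat"
  assumes A: "A \<in> carrier_mat (Suc m) (Suc m)" and B: "B \<in> carrier_mat (Suc m) (Suc m)"
    and agree: "\<And>i j. i < Suc m \<Longrightarrow> j < Suc m \<Longrightarrow> i \<noteq> 0 \<or> j = 0 \<Longrightarrow> A $$ (i,j) = B $$ (i,j)"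
  shows "char_poly (-A) - char_poly (-B) = det (four_block_mat (0\<^sub>m 1 1)
      (mat_of_row (map_vec (\<lambda>a. [:a:]) (row1_tail A - row1_tail B)))
      (mat_of_cols m [map_vec (\<lambda>a. [:a:]) (col1_tail A)])
      (char_poly_matrix (- hat A)))" (is "_ = det ?N")
proof -
  define P where "P = char_poly_matrix (-A)"
  define Q where "Q = char_poly_matrix (-B)"
  have P: "P \<in> carrier_mat (Suc m) (Suc m)" and Q: "Q \<in> carrier_mat (Suc m) (Suc m)"
    unfolding P_def Q_def using A B by auto
  have hA: "hat A \<in> carrier_mat m m" using A unfolding hat_def by auto
  hence K: "char_poly_matrix (- hat A) \<in> carrier_mat m m" by simp
  hence dimK: "dim_row (char_poly_matrix (- hat A)) = m" "dim_col (char_poly_matrix (- hat A)) = m" by auto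
  have "char_poly (-A) - char_poly (-B)
      = det (mat (Suc m) (Suc m) (\<lambda>(i,j). if i = 0 then P $$ (0,j) - Q $$ (0,j) else P $$ (i,j)))"
    unfolding char_poly_def P_def[symmetric] Q_def[symmetric]
  proof (rule det_diff_first_row[OF P Q])
    fix i j assume "0 < i" "i < Suc m" "j < Suc m"
    then show "P $$ (i,j) = Q $$ (i,j)" unfolding P_def Q_def char_poly_matrix_def using A B agree[of i j] by auto
  qed simp
  also have "mat (Suc m) (Suc m) (\<lambda>(i,j). if i = 0 then P $$ (0,j) - Q $$ (0,j) else P $$ (i,j)) = ?N"
  proof (rule eq_matI)
    fix i j assume "i < dim_row ?N" "j < dim_col ?N"
    hence ij: "i < Suc m" "j < Suc m" using K by auto
    show "mat (Suc m) (Suc m) (\<lambda>(i,j). if i = 0 then P $$ (0,j) - Q $$ (0,j) else P $$ (i,j)) $$ (i,j) = ?N $$ (i,j)"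
    proof (cases i; cases j)
      assume "i = 0" "j = 0"
      then show ?thesis using A B agree[of 0 0] unfolding P_def Q_def char_poly_matrix_def by simp
    next
      fix j' assume "i = 0" "j = Suc j'"
      then show ?thesis using ij A B dimK unfolding P_def Q_def row1_tail_def char_poly_matrix_def by simp
    next
      fix i' assume "i = Suc i'" "j = 0"
      then show ?thesis using ij A B dimK unfolding P_def col1_tail_def char_poly_matrix_def by (simp add: mat_of_cols_Cons_index_0)
    next
      fix i' j' assume "i = Suc i'" "j = Suc j'"
      then show ?thesis using ij A B dimK unfolding P_def char_poly_matrix_def hat_def by simp
    qed
  qed (use K in auto)
  finally show ?thesis .
qed

(* Schur complement: multiplying [0, U; V, K] by [det K, 0; -adj(K) V, I] gives the
   block-triangular matrix [-U adj(K) V, U; 0, K]. *)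
lemma bordered_det_times_det:
  fixes K :: "'a::idom mat"
  assumes K: "K \<in> carrier_mat m m" and U: "U \<in> carrier_mat 1 m" and V: "V \<in> carrier_mat m 1"
  shows "det (four_block_mat (0\<^sub>m 1 1) U V K) * det K = - (U * adj_mat K * V) $$ (0,0) * det K"
proof -
  let ?aK = "adj_mat K" and ?d = "det K"
  define N where "N = four_block_mat (0\<^sub>m 1 1) U V K"
  define F where "F = four_block_mat (?d \<cdot>\<^sub>m 1\<^sub>m 1) (0\<^sub>m 1 m) (-(?aK * V)) (1\<^sub>m m)"
  have aK: "?aK \<in> carrier_mat m m" using adj_mat[OF K] by auto
  have KaK: "K * ?aK = ?d \<cdot>\<^sub>m 1\<^sub>m m" using adj_mat[OF K] by auto
  have aKV: "?aK * V \<in> carrier_mat m 1" using aK V by auto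
  have Nc: "N \<in> carrier_mat (1+m) (1+m)" unfolding N_def using K U V by (intro four_block_carrier_mat) auto
  have Fc: "F \<in> carrier_mat (1+m) (1+m)" unfolding F_def using aKV by (intro four_block_carrier_mat) auto
  have TL: "0\<^sub>m 1 1 * (?d \<cdot>\<^sub>m 1\<^sub>m 1) + U * (-(?aK * V)) = -(U * ?aK * V)"
    using U aK V aKV by (simp add: assoc_mult_mat[OF U aK V] uminus_mult_right_mat[of U])
  have TR: "0\<^sub>m 1 1 * 0\<^sub>m 1 m + U * 1\<^sub>m m = U" using U by simp
  have BL: "V * (?d \<cdot>\<^sub>m 1\<^sub>m 1) + K * (-(?aK * V)) = 0\<^sub>m m 1"
  proof -
    have "V * (?d \<cdot>\<^sub>m 1\<^sub>m 1) = ?d \<cdot>\<^sub>m V" using V by (subst mult_smult_distrib[OF V one_carrier_mat]) simp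
    moreover have "K * (-(?aK * V)) = -(K * (?aK * V))" using K aKV by (intro uminus_mult_right_mat) auto
    moreover have "K * (?aK * V) = ?d \<cdot>\<^sub>m V"
      using K aK V KaK by (simp add: assoc_mult_mat[symmetric, OF K aK V] mult_smult_assoc_mat[of _ m m _ 1])
    ultimately show ?thesis using V by (intro eq_matI) auto
  qed
  have BR: "V * 0\<^sub>m 1 m + K * 1\<^sub>m m = K" using V K by simp
  have NF: "N * F = four_block_mat (-(U * ?aK * V)) U (0\<^sub>m m 1) K"
    unfolding N_def F_def
    by (subst mult_four_block_mat[of _ 1 1 _ m _ m _ _ 1 _ m]) (use K U V aKV in \<open>auto simp only: TL TR BL BR zero_carrier_mat smult_carrier_mat one_carrier_mat uminus_carrier_iff_mat\<close>)
  have "det F = ?d"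
    unfolding F_def using aKV by (subst det_four_block_mat_upper_right_zero[of _ 1 _ m]) auto
  hence "det N * ?d = det (N * F)" using det_mult[OF Nc Fc] by simp
  also have "\<dots> = det (-(U * ?aK * V)) * ?d"
    unfolding NF using U aK V K by (intro det_four_block_mat_lower_left_zero) auto
  also have "det (-(U * ?aK * V)) = - (U * ?aK * V) $$ (0,0)"
    using U aK V by (subst det_single) auto
  finally show ?thesis unfolding N_def .
qed

lemma bordered_det_zero_imp_adj_form_zero:
  fixes K :: "'a::idom mat"
  assumes K: "K \<in> carrier_mat m m" and u: "u \<in> carrier_vec m" and w: "w \<in> carrier_vec m"
    and N0: "det (four_block_mat (0\<^sub>m 1 1) (mat_of_row u) (mat_of_cols m [w]) K) = 0"
    and dK: "det K \<noteq> 0"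
  shows "u \<bullet> (adj_mat K *\<^sub>v w) = 0"
proof -
  let ?aK = "adj_mat K"
  have U: "mat_of_row u \<in> carrier_mat 1 m" and V: "mat_of_cols m [w] \<in> carrier_mat m 1" using u w by auto
  have aK: "?aK \<in> carrier_mat m m" using adj_mat[OF K] by auto
  have "(mat_of_row u * ?aK * mat_of_cols m [w]) $$ (0,0) = 0"
    using bordered_det_times_det[OF K U V] N0 dK by simp
  moreover have "row (mat_of_row u * ?aK) 0 = vec m (\<lambda>j. u \<bullet> col ?aK j)"
    using U aK by (intro eq_vecI) auto
  moreover have "?aK *\<^sub>v w = vec m (\<lambda>i. row ?aK i \<bullet> w)"
    using aK by (intro eq_vecI) auto
  ultimately show ?thesis
    using U aK V w assoc_scalar_prod[OF u aK w] by simp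
qed

section \<open>A vanishing adjugate form against a cyclic vector\<close>

lemma pow_mat_Suc_left:
  assumes H: "(H :: 'a::semiring_1 mat) \<in> carrier_mat m m"
  shows "H ^\<^sub>m Suc k = H * H ^\<^sub>m k"
proof (induction k)
  case 0 then show ?case using H by simp
next
  case (Suc k)
  have Hk: "H ^\<^sub>m k \<in> carrier_mat m m" using H by simp
  have "H ^\<^sub>m Suc (Suc k) = H ^\<^sub>m Suc k * H" by (simp only: pow_mat.simps)
  also have "\<dots> = (H * H ^\<^sub>m k) * H" by (simp only: Suc)
  also have "\<dots> = H * (H ^\<^sub>m k * H)" by (rule assoc_mult_mat[OF H Hk H])
  also have "\<dots> = H * H ^\<^sub>m Suc k" by (simp only: pow_mat.simps)
  finally show ?case .
qed

lemma finsum_comb_carrier: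
  fixes k :: nat
  assumes "\<And>i. i < k \<Longrightarrow> v i \<in> carrier_vec m"
  shows "finsum_vec TYPE('a::comm_ring_1) m (\<lambda>i. \<beta> i \<cdot>\<^sub>v v i) {..<k} \<in> carrier_vec m"
  using assms by (intro finsum_vec_closed) auto

lemma index_finsum_comb:
  fixes k :: nat
  assumes v: "\<And>i. i < k \<Longrightarrow> v i \<in> carrier_vec m" and l: "l < m"
  shows "finsum_vec TYPE('a::comm_ring_1) m (\<lambda>i. \<beta> i \<cdot>\<^sub>v v i) {..<k} $ l = (\<Sum>i<k. \<beta> i * v i $ l)"
proof -
  have "finsum_vec TYPE('a) m (\<lambda>i. \<beta> i \<cdot>\<^sub>v v i) {..<k} $ l = (\<Sum>i<k. (\<beta> i \<cdot>\<^sub>v v i) $ l)"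
    using v l by (intro index_finsum_vec) auto
  also have "\<dots> = (\<Sum>i<k. \<beta> i * v i $ l)"
  proof (rule sum.cong[OF refl])
    fix i assume "i \<in> {..<k}"
    then show "(\<beta> i \<cdot>\<^sub>v v i) $ l = \<beta> i * v i $ l" using v[of i] l by auto
  qed
  finally show ?thesis .
qed

lemma scalar_prod_finsum_vec:
  fixes d :: "'a::comm_ring_1 vec" and k :: nat
  assumes d: "d \<in> carrier_vec m" and v: "\<And>i. i < k \<Longrightarrow> v i \<in> carrier_vec m"
  shows "d \<bullet> finsum_vec TYPE('a) m (\<lambda>i. \<beta> i \<cdot>\<^sub>v v i) {..<k} = (\<Sum>i<k. \<beta> i * (d \<bullet> v i))"
proof -
  have "d \<bullet> finsum_vec TYPE('a) m (\<lambda>i. \<beta> i \<cdot>\<^sub>v v i) {..<k} = (\<Sum>l<m. d $ l * (\<Sum>i<k. \<beta> i * v i $ l))"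
    unfolding scalar_prod_def using d finsum_comb_carrier[of k v m \<beta>, OF v]
    by (auto simp: index_finsum_comb[of k v, OF v] atLeast0LessThan)
  also have "\<dots> = (\<Sum>i<k. \<Sum>l<m. \<beta> i * (d $ l * v i $ l))"
    by (subst sum.swap) (simp add: sum_distrib_left ac_simps)
  also have "\<dots> = (\<Sum>i<k. \<beta> i * (d \<bullet> v i))"
  proof (rule sum.cong[OF refl])
    fix i assume "i \<in> {..<k}"
    then show "(\<Sum>l<m. \<beta> i * (d $ l * v i $ l)) = \<beta> i * (d \<bullet> v i)"
      using v[of i] by (auto simp: scalar_prod_def sum_distrib_left atLeast0LessThan)
  qed
  finally show ?thesis .
qed

lemma (in comm_ring_hom) vec_hom_scalar_prod:
  assumes "dim_vec x = dim_vec y"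
  shows "vec\<^sub>h x \<bullet> vec\<^sub>h y = hom (x \<bullet> y)"
  using assms by (simp add: scalar_prod_def hom_sum hom_mult)

lemma (in comm_ring_hom) vec_hom_finsum_vec:
  fixes k :: nat
  assumes v: "\<And>i. i < k \<Longrightarrow> v i \<in> carrier_vec m"
  shows "vec\<^sub>h (finsum_vec TYPE('a) m (\<lambda>i. \<beta> i \<cdot>\<^sub>v v i) {..<k})
    = finsum_vec TYPE('b) m (\<lambda>i. hom (\<beta> i) \<cdot>\<^sub>v vec\<^sub>h (v i)) {..<k}"
proof -
  have v': "\<And>i. i < k \<Longrightarrow> vec\<^sub>h (v i) \<in> carrier_vec m" using v by auto
  have c: "finsum_vec TYPE('a) m (\<lambda>i. \<beta> i \<cdot>\<^sub>v v i) {..<k} \<in> carrier_vec m"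
    "finsum_vec TYPE('b) m (\<lambda>i. hom (\<beta> i) \<cdot>\<^sub>v vec\<^sub>h (v i)) {..<k} \<in> carrier_vec m"
    using finsum_comb_carrier[of k v, OF v] finsum_comb_carrier[of k "\<lambda>i. vec\<^sub>h (v i)", OF v'] by auto
  show ?thesis
  proof (rule eq_vecI)
    fix l assume "l < dim_vec (finsum_vec TYPE('b) m (\<lambda>i. hom (\<beta> i) \<cdot>\<^sub>v vec\<^sub>h (v i)) {..<k})"
    hence l: "l < m" using c by auto
    have "vec\<^sub>h (v i) $ l = hom (v i $ l)" if "i < k" for i using v[OF that] l by auto
    thus "vec\<^sub>h (finsum_vec TYPE('a) m (\<lambda>i. \<beta> i \<cdot>\<^sub>v v i) {..<k}) $ l
      = finsum_vec TYPE('b) m (\<lambda>i. hom (\<beta> i) \<cdot>\<^sub>v vec\<^sub>h (v i)) {..<k} $ l"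
      using c l by (simp add: index_finsum_comb[of k v, OF v l] index_finsum_comb[of k "\<lambda>i. vec\<^sub>h (v i)", OF v' l] hom_sum hom_mult)
  qed (use c in auto)
qed

lemma smult_one_mult_mat_vec:
  fixes x :: "'a::comm_ring_1 vec"
  assumes "x \<in> carrier_vec n"
  shows "(c \<cdot>\<^sub>m 1\<^sub>m n) *\<^sub>v x = c \<cdot>\<^sub>v x"
  using assms by (intro eq_vecI)
    (auto simp: scalar_prod_def if_distrib[of "\<lambda>y. _ * y"] if_distrib[of "\<lambda>y. y * _"] cong: if_cong)

(* The adjugate relation adj(K) K = det K I for K = t I + H, read as a recurrence for the
   bilinear form u^T adj(K) x along x \<mapsto> H x. *)
lemma adj_shift_mult_vec:
  fixes H :: "'a::comm_ring_1 mat"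
  assumes H: "H \<in> carrier_mat m m" and x: "x \<in> carrier_vec m" and u: "u \<in> carrier_vec m"
    and K: "K = t \<cdot>\<^sub>m 1\<^sub>m m + H"
  shows "u \<bullet> (adj_mat K *\<^sub>v (H *\<^sub>v x)) = det K * (u \<bullet> x) - t * (u \<bullet> (adj_mat K *\<^sub>v x))"
proof -
  have Kc: "K \<in> carrier_mat m m" using H K by simp
  note aK = adj_mat[OF Kc]
  have "adj_mat K *\<^sub>v (K *\<^sub>v x) = det K \<cdot>\<^sub>v x"
    using assoc_mult_mat_vec[OF aK(1) Kc x] aK(3) smult_one_mult_mat_vec[OF x] by simp
  moreover have "K *\<^sub>v x = t \<cdot>\<^sub>v x + H *\<^sub>v x"
    using H x unfolding K by (simp add: add_mult_distrib_mat_vec[of _ m m] smult_one_mult_mat_vec)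
  moreover have "adj_mat K *\<^sub>v (t \<cdot>\<^sub>v x) = t \<cdot>\<^sub>v (adj_mat K *\<^sub>v x)"
    using aK(1) x by (intro eq_vecI) auto
  ultimately have "det K \<cdot>\<^sub>v x = t \<cdot>\<^sub>v (adj_mat K *\<^sub>v x) + adj_mat K *\<^sub>v (H *\<^sub>v x)"
    using aK H x by (simp add: mult_add_distrib_mat_vec)
  hence "u \<bullet> (det K \<cdot>\<^sub>v x) = u \<bullet> (t \<cdot>\<^sub>v (adj_mat K *\<^sub>v x)) + u \<bullet> (adj_mat K *\<^sub>v (H *\<^sub>v x))"
    using aK H x u by (simp add: scalar_prod_add_distrib[OF u])
  hence "det K * (u \<bullet> x) = t * (u \<bullet> (adj_mat K *\<^sub>v x)) + u \<bullet> (adj_mat K *\<^sub>v (H *\<^sub>v x))"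
    using aK x u by simp
  thus ?thesis by (simp add: algebra_simps)
qed

lemma linear_recurrence_closed_form:
  fixes a \<mu> :: "nat \<Rightarrow> 'a::comm_ring_1"
  assumes a0: "a 0 = 0" and step: "\<And>k. a (Suc k) = D * \<mu> k - t * a k"
  shows "a k = D * (\<Sum>i<k. (-t)^(k-1-i) * \<mu> i)"
proof (induction k)
  case 0 then show ?case using a0 by simp
next
  case (Suc k)
  have "(\<Sum>i<k. (-t)^(k-i) * \<mu> i) = (\<Sum>i<k. (-t) * ((-t)^(k-1-i) * \<mu> i))"
  proof (rule sum.cong[OF refl])
    fix i assume "i \<in> {..<k}"
    hence "k - i = Suc (k-1-i)" by auto
    thus "(-t)^(k-i) * \<mu> i = (-t) * ((-t)^(k-1-i) * \<mu> i)" by simp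
  qed
  hence S: "(\<Sum>i<Suc k. (-t)^(Suc k-1-i) * \<mu> i) = \<mu> k - t * (\<Sum>i<k. (-t)^(k-1-i) * \<mu> i)"
    by (simp add: sum_distrib_left sum_negf)
  have "a (Suc k) = D * (\<mu> k - t * (\<Sum>i<k. (-t)^(k-1-i) * \<mu> i))"
    using step[of k] Suc.IH by (simp add: algebra_simps)
  thus ?case unfolding S .
qed

lemma neg_X_power_const: "(-[:0,1::'a::comm_ring_1:])^p * [:a:] = monom ((-1)^p * a) p"
proof (induction p)
  case 0 then show ?case by (simp add: monom_0)
next
  case (Suc p)
  have "(-[:0,1::'a:])^Suc p * [:a:] = - ([:0,1:] * ((-[:0,1::'a:])^p * [:a:]))" by (simp add: algebra_simps)
  also have "\<dots> = - pCons 0 (monom ((-1)^p * a) p)" unfolding Suc by simp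
  also have "\<dots> = monom ((-1)^Suc p * a) (Suc p)" by (simp add: monom_Suc minus_monom)
  finally show ?case .
qed

lemma coeff_neg_X_power_const: "coeff ((-[:0,1::'a::comm_ring_1:])^p * [:a:]) e = (if e = p then (-1)^p * a else 0)"
  unfolding neg_X_power_const by (simp add: coeff_monom)

(* Comparing coefficients of t^(m-1-j): the left-hand side contributes (-1)^(m-1-j) mu_j, while on
   the right only mu_i with i < j occur, so all mu_j vanish by induction on j. *)
lemma triangular_coeffs_zero:
  fixes \<mu> \<beta> :: "nat \<Rightarrow> complex"
  assumes E: "(\<Sum>i<m. (-[:0,1:])^(m-1-i) * [:\<mu> i:]) = (\<Sum>k<m. [:\<beta> k:] * (\<Sum>i<k. (-[:0,1:])^(k-1-i) * [:\<mu> i:]))"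
  shows "j < m \<Longrightarrow> \<mu> j = 0"
proof (induction j rule: less_induct)
  case (less j)
  define e where "e = m - 1 - j"
  have "coeff (\<Sum>i<m. (-[:0,1:])^(m-1-i) * [:\<mu> i:]) e = (\<Sum>i<m. if i = j then (-1)^e * \<mu> i else 0)"
    unfolding coeff_sum coeff_neg_X_power_const
  proof (rule sum.cong[OF refl])
    fix i assume "i \<in> {..<m}"
    hence "(e = m - 1 - i) = (i = j)" using less.prems unfolding e_def by auto
    thus "(if e = m - 1 - i then (- 1) ^ (m - 1 - i) * \<mu> i else 0) = (if i = j then (- 1) ^ e * \<mu> i else 0)"
      by auto
  qed
  also have "\<dots> = (-1)^e * \<mu> j" using less.prems by (simp add: sum.delta)
  finally have L: "coeff (\<Sum>i<m. (-[:0,1:])^(m-1-i) * [:\<mu> i:]) e = (-1)^e * \<mu> j" .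
  have R: "coeff (\<Sum>k<m. [:\<beta> k:] * (\<Sum>i<k. (-[:0,1:])^(k-1-i) * [:\<mu> i:])) e = 0"
    unfolding coeff_sum
  proof (rule sum.neutral, rule)
    fix k assume k: "k \<in> {..<m}"
    have "coeff (\<Sum>i<k. (-[:0,1:])^(k-1-i) * [:\<mu> i:]) e = 0"
      unfolding coeff_sum coeff_neg_X_power_const
    proof (rule sum.neutral, rule)
      fix i assume i: "i \<in> {..<k}"
      show "(if e = k - 1 - i then (- 1) ^ (k - 1 - i) * \<mu> i else 0) = 0"
      proof (cases "e = k - 1 - i")
        case True
        hence "i < j" using i k less.prems unfolding e_def by auto
        thus ?thesis using less.IH less.prems by simp
      qed simp
    qed
    thus "coeff ([:\<beta> k:] * (\<Sum>i<k. (-[:0,1:])^(k-1-i) * [:\<mu> i:])) e = 0" by simp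
  qed
  from arg_cong[OF E, of "\<lambda>p. coeff p e"] have "(-1)^e * \<mu> j = 0" unfolding L R .
  thus ?case by simp
qed

lemma orthogonal_to_cyclic_orbit:
  assumes cyc: "cyclic_vector H c" and m: "dim_row H = m" and d: "d \<in> carrier_vec m"
    and orth: "\<And>j. j < m \<Longrightarrow> d \<bullet> ((H ^\<^sub>m j) *\<^sub>v c) = 0"
  shows "d = 0\<^sub>v m"
proof (rule eq_vecI)
  have H: "H \<in> carrier_mat m m" and c: "c \<in> carrier_vec m"
    using cyc m unfolding cyclic_vector_def Let_def by auto
  have v: "(H ^\<^sub>m i) *\<^sub>v c \<in> carrier_vec m" for i by (rule mult_mat_vec_carrier[OF pow_carrier_mat[OF H] c])
  fix q assume "q < dim_vec (0\<^sub>v m :: complex vec)"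
  hence q: "q < m" by simp
  obtain \<gamma> where \<gamma>: "unit_vec m q = finsum_vec TYPE(complex) m (\<lambda>i. \<gamma> i \<cdot>\<^sub>v ((H ^\<^sub>m i) *\<^sub>v c)) {..<m}"
    using cyc m unfolding cyclic_vector_def Let_def by (meson unit_vec_carrier)
  have "d $ q = d \<bullet> unit_vec m q" using d q by simp
  also have "\<dots> = (\<Sum>i<m. \<gamma> i * (d \<bullet> ((H ^\<^sub>m i) *\<^sub>v c)))"
    unfolding \<gamma> by (rule scalar_prod_finsum_vec[OF d v])
  also have "\<dots> = 0" using orth by simp
  finally show "d $ q = 0\<^sub>v m $ q" using q by simp
qed (use d in simp)

lemma bilinear_form_lift_finsum:
  fixes M :: "'a::comm_ring_1 poly mat" and k :: nat
  assumes M: "M \<in> carrier_mat m m" and u: "u \<in> carrier_vec m"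
    and v: "\<And>i. i < k \<Longrightarrow> v i \<in> carrier_vec m"
  shows "u \<bullet> (M *\<^sub>v map_vec (\<lambda>a. [:a:]) (finsum_vec TYPE('a) m (\<lambda>i. \<beta> i \<cdot>\<^sub>v v i) {..<k}))
    = (\<Sum>i<k. [:\<beta> i:] * (u \<bullet> (M *\<^sub>v map_vec (\<lambda>a. [:a:]) (v i))))"
proof -
  let ?lift = "map_vec (\<lambda>a::'a. [:a:])"
  have lv: "\<And>i. i < k \<Longrightarrow> ?lift (v i) \<in> carrier_vec m" using v by simp
  have g: "transpose_mat M *\<^sub>v u \<in> carrier_vec m" using M u by simp
  have form: "u \<bullet> (M *\<^sub>v x) = (transpose_mat M *\<^sub>v u) \<bullet> x" if "x \<in> carrier_vec m" for x
    using M u that by (intro transpose_vec_mult_scalar[symmetric])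
  have comb: "?lift (finsum_vec TYPE('a) m (\<lambda>i. \<beta> i \<cdot>\<^sub>v v i) {..<k}) \<in> carrier_vec m"
    using finsum_comb_carrier[of k v m \<beta>, OF v] by simp
  have "u \<bullet> (M *\<^sub>v ?lift (finsum_vec TYPE('a) m (\<lambda>i. \<beta> i \<cdot>\<^sub>v v i) {..<k}))
      = (transpose_mat M *\<^sub>v u) \<bullet> ?lift (finsum_vec TYPE('a) m (\<lambda>i. \<beta> i \<cdot>\<^sub>v v i) {..<k})"
    by (rule form[OF comb])
  also have "\<dots> = (transpose_mat M *\<^sub>v u) \<bullet> finsum_vec TYPE('a poly) m (\<lambda>i. [:\<beta> i:] \<cdot>\<^sub>v ?lift (v i)) {..<k}"
    using const_poly.vec_hom_finsum_vec[OF v] by simp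
  also have "\<dots> = (\<Sum>i<k. [:\<beta> i:] * ((transpose_mat M *\<^sub>v u) \<bullet> ?lift (v i)))"
    by (rule scalar_prod_finsum_vec[OF g lv])
  also have "\<dots> = (\<Sum>i<k. [:\<beta> i:] * (u \<bullet> (M *\<^sub>v ?lift (v i))))"
    using lv by (intro sum.cong refl) (simp add: form)
  finally show ?thesis .
qed

lemma adj_form_orbit_recurrence:
  fixes H :: "'a::comm_ring_1 mat"
  assumes H: "H \<in> carrier_mat m m" and c: "c \<in> carrier_vec m" and d: "d \<in> carrier_vec m"
    and K: "K = char_poly_matrix (-H)"
  shows "map_vec (\<lambda>a. [:a:]) d \<bullet> (adj_mat K *\<^sub>v map_vec (\<lambda>a. [:a:]) ((H ^\<^sub>m Suc k) *\<^sub>v c))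
    = det K * [:d \<bullet> ((H ^\<^sub>m k) *\<^sub>v c):]
      - [:0,1:] * (map_vec (\<lambda>a. [:a:]) d \<bullet> (adj_mat K *\<^sub>v map_vec (\<lambda>a. [:a:]) ((H ^\<^sub>m k) *\<^sub>v c)))"
proof -
  let ?lift = "map_vec (\<lambda>a::'a. [:a:])"
  define Hp where "Hp = map_mat (\<lambda>a. [:a:]) H"
  define x where "x = (H ^\<^sub>m k) *\<^sub>v c"
  have Hp: "Hp \<in> carrier_mat m m" unfolding Hp_def using H by simp
  have x: "x \<in> carrier_vec m" unfolding x_def by (rule mult_mat_vec_carrier[OF pow_carrier_mat[OF H] c])
  have "(H ^\<^sub>m Suc k) *\<^sub>v c = H *\<^sub>v x"
    unfolding x_def pow_mat_Suc_left[OF H] by (rule assoc_mult_mat_vec[OF H pow_carrier_mat[OF H] c])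
  hence "?lift ((H ^\<^sub>m Suc k) *\<^sub>v c) = Hp *\<^sub>v ?lift x"
    unfolding Hp_def using const_poly.mult_mat_vec_hom[OF H x] by simp
  moreover have "?lift d \<bullet> ?lift x = [:d \<bullet> x:]"
    using d x by (intro const_poly.vec_hom_scalar_prod) simp
  moreover have K_eq: "K = [:0,1:] \<cdot>\<^sub>m 1\<^sub>m m + Hp"
    unfolding K Hp_def by (rule char_poly_matrix_uminus[OF H])
  ultimately show ?thesis
    using adj_shift_mult_vec[OF Hp _ _ K_eq, of "?lift x" "?lift d"] d x unfolding x_def[symmetric] by simp
qed

lemma adj_form_zero_imp_zero:
  fixes H :: "complex mat" and c d :: "complex vec"
  assumes cyc: "cyclic_vector H c" and m: "dim_row H = m" and d: "d \<in> carrier_vec m"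
    and form0: "map_vec (\<lambda>a. [:a:]) d \<bullet> (adj_mat (char_poly_matrix (-H)) *\<^sub>v map_vec (\<lambda>a. [:a:]) c) = 0"
  shows "d = 0\<^sub>v m"
proof -
  let ?X = "[:0,1::complex:]" and ?lift = "map_vec (\<lambda>a::complex. [:a:])"
  have H: "H \<in> carrier_mat m m" and c: "c \<in> carrier_vec m"
    using cyc m unfolding cyclic_vector_def Let_def by auto
  define K where "K = char_poly_matrix (-H)"
  have K: "K \<in> carrier_mat m m" unfolding K_def using H by simp
  have dK: "det K \<noteq> 0"
    using char_poly_nonzero[of "-H" m] H unfolding K_def char_poly_def by simp
  define v where "v k = (H ^\<^sub>m k) *\<^sub>v c" for k
  have v: "v k \<in> carrier_vec m" for k
    unfolding v_def by (rule mult_mat_vec_carrier[OF pow_carrier_mat[OF H] c])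
  define a where "a k = ?lift d \<bullet> (adj_mat K *\<^sub>v ?lift (v k))" for k
  have a0: "a 0 = 0" using form0 H c unfolding a_def v_def K_def by simp
  have step: "a (Suc k) = det K * [:d \<bullet> v k:] - ?X * a k" for k
    unfolding a_def v_def by (rule adj_form_orbit_recurrence[OF H c d K_def])
  have closed: "a k = det K * (\<Sum>i<k. (-?X)^(k-1-i) * [:d \<bullet> v i:])" for k
    by (rule linear_recurrence_closed_form[OF a0 step])
  obtain \<beta> where \<beta>: "v m = finsum_vec TYPE(complex) m (\<lambda>i. \<beta> i \<cdot>\<^sub>v v i) {..<m}"
    using cyc m v[of m] unfolding cyclic_vector_def Let_def v_def by meson
  have "a m = (\<Sum>i<m. [:\<beta> i:] * a i)"
    unfolding a_def \<beta> using adj_mat(1)[OF K] d v by (intro bilinear_form_lift_finsum) auto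
  hence "det K * (\<Sum>i<m. (-?X)^(m-1-i) * [:d \<bullet> v i:])
      = det K * (\<Sum>k<m. [:\<beta> k:] * (\<Sum>i<k. (-?X)^(k-1-i) * [:d \<bullet> v i:]))"
    unfolding closed by (simp add: sum_distrib_left ac_simps)
  hence "(\<Sum>i<m. (-?X)^(m-1-i) * [:d \<bullet> v i:])
      = (\<Sum>k<m. [:\<beta> k:] * (\<Sum>i<k. (-?X)^(k-1-i) * [:d \<bullet> v i:]))"
    using dK by simp
  from triangular_coeffs_zero[OF this] show ?thesis
    by (intro orthogonal_to_cyclic_orbit[OF cyc m d]) (simp add: v_def)
qed

lemma agree_off_first_row:
  assumes A: "A \<in> carrier_mat n n" and B: "B \<in> carrier_mat n n"
    and hat: "hat A = hat B" and col: "col1_tail A = col1_tail B" and corner: "A $$ (0,0) = B $$ (0,0)"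
    and ij: "i < n" "j < n" "i \<noteq> 0 \<or> j = 0"
  shows "A $$ (i,j) = B $$ (i,j)"
proof (cases i)
  case 0
  then show ?thesis using ij corner by simp
next
  case (Suc i')
  show ?thesis
  proof (cases j)
    case 0
    have "col1_tail A $ i' = col1_tail B $ i'" using col by simp
    then show ?thesis using A B ij Suc 0 unfolding col1_tail_def by simp
  next
    case (Suc j')
    have "hat A $$ (i', j') = hat B $$ (i', j')" using hat by simp
    then show ?thesis using A B ij \<open>i = Suc i'\<close> Suc unfolding hat_def by simp
  qed
qed

lemma vec_eq_of_diff_zero:
  fixes x y :: "'a::ab_group_add vec"
  assumes "x \<in> carrier_vec n" "y \<in> carrier_vec n" and "x - y = 0\<^sub>v n"
  shows "x = y"
proof (rule eq_vecI)
  fix j assume "j < dim_vec y"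
  then show "x $ j = y $ j" using arg_cong[OF assms(3), of "\<lambda>v. v $ j"] assms(1,2) by simp
qed (use assms in simp)

theorem lemma2p4:
  fixes n :: nat and A B :: "complex mat"
  assumes "n \<ge> 2"
    and "A \<in> G1 n" and "B \<in> G1 n"
    and "pi_eq n A B"
    and "hat A = hat B"
    and "col1_tail A = col1_tail B"
  shows "row1_tail A = row1_tail B"
proof -
  define m where "m = n - 1"
  define d where "d = row1_tail A - row1_tail B"
  let ?lift = "map_vec (\<lambda>a::complex. [:a:])" and ?K = "char_poly_matrix (- hat A)"
  have n: "n = Suc m" using assms(1) unfolding m_def by simp
  have A: "A \<in> carrier_mat n n" and B: "B \<in> carrier_mat n n"
    and cyc: "cyclic_vector (hat A) (col1_tail A)"
    using assms(2,3) unfolding G1_def by auto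
  have dims: "hat A \<in> carrier_mat m m" "col1_tail A \<in> carrier_vec m"
    "row1_tail A \<in> carrier_vec m" "row1_tail B \<in> carrier_vec m"
    using A B unfolding hat_def col1_tail_def row1_tail_def m_def by auto
  have "Xc n A 1 = Xc n B 1" using assms(1,4) unfolding pi_eq_def by auto
  hence "A $$ (0,0) = B $$ (0,0)" unfolding Xc_def by simp
  note agree = agree_off_first_row[OF A B assms(5,6) this]
  have "char_poly (-A) = char_poly (-B)"
    using assms(4) by (intro char_poly_uminus_eq_first_row_change[OF A B agree]) (auto simp: pi_eq_def)
  hence "det (four_block_mat (0\<^sub>m 1 1) (mat_of_row (?lift d)) (mat_of_cols m [?lift (col1_tail A)]) ?K) = 0"
    using char_poly_diff_bordered[of A m B] A B agree unfolding n d_def by simp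
  hence "?lift d \<bullet> (adj_mat ?K *\<^sub>v ?lift (col1_tail A)) = 0"
    using dims char_poly_nonzero[of "- hat A" m] unfolding d_def
    by (intro bordered_det_zero_imp_adj_form_zero) (auto simp: char_poly_def)
  hence "d = 0\<^sub>v m"
    using cyc dims unfolding d_def by (intro adj_form_zero_imp_zero) auto
  then show ?thesis unfolding d_def by (rule vec_eq_of_diff_zero[OF dims(3,4)])
qed

end
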